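(* Assume ${\rm ZFC}$. If the principle $(\lrcorner)$ holds, then $2^{\aleph_0}>\aleph_1$.
   Context: A map $m:[X]^{<\omega}\to[X]^{<\omega}$ (where $[X]^{<\omega}$ is the set of finite subsets of $X$) is called monotone if $a\subseteq m(a)$ for every finite $a\subseteq X$. The principle $(\lrcorner)$ is the statement: for every sequence $\langle f_\alpha:\alpha<\omega_1\rangle$ of functions from $\omega_1$ to $\omega_1$, every finite subset $F$ of $\omega_1$ and every monotone map $m:[\omega_1]^{<\omega}\to[\omega_1]^{<\omega}$, there exists a function $g:\omega_1\to\omega_1$ such that $F\cap\mathrm{ran}(g)=\emptyset$ and for every $a\in[\omega_1]^{<\omega}$ there exists $b\in[\omega_1]^{<\omega}$ with $a\subseteq b$ such that $\{\beta<\omega_1: f_\alpha(\beta)=g(\beta)\}\subseteq m(b)$ for all $\alpha\in m(b)$. *)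

theory Defs
  imports Main
begin

text \<open>A map m on finite subsets of X (represented as a total map on sets, only
its values on finite sets matter) is monotone if it sends finite sets to finite
supersets.\<close>
definition monotone_fin_map :: "('a set \<Rightarrow> 'a set) \<Rightarrow> bool" where
  "monotone_fin_map m \<longleftrightarrow> (\<forall>a. finite a \<longrightarrow> finite (m a) \<and> a \<subseteq> m a)"

text \<open>The principle (corner) for a type 'a playing the role of omega_1.\<close>
definition corner_principle :: "'a itself \<Rightarrow> bool" where
  "corner_principle _ \<longleftrightarrow>
     (\<forall>(f :: 'a \<Rightarrow> 'a \<Rightarrow> 'a) (F :: 'a set) (m :: 'a set \<Rightarrow> 'a set).
        finite F \<longrightarrow> monotone_fin_map m \<longrightarrow>
        (\<exists>g :: 'a \<Rightarrow> 'a. F \<inter> range g = {} \<and>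
           (\<forall>a. finite a \<longrightarrow>
              (\<exists>b. finite b \<and> a \<subseteq> b \<and>
                 (\<forall>\<alpha>\<in>m b. {\<beta>. f \<alpha> \<beta> = g \<beta>} \<subseteq> m b)))))"

end

theory Submission
  imports Defs "HOL-Library.Nat_Bijection"
begin

(* Taking m to be the identity, the principle yields for every family f a single g that
   agrees with each f alpha only finitely often. If omega_1 had the size of the continuum,
   the sequences omega -> omega_1 could be coded by countable ordinals, so some f alpha
   would copy g along a fixed copy of omega inside omega_1 and hence agree with g
   infinitely often. Since 2^aleph_0 >= aleph_1 by Cantor, 2^aleph_0 > aleph_1 remains. *)

lemma corner_principle_finite_agreement:
  fixes f :: "'a \<Rightarrow> 'a \<Rightarrow> 'a"
  assumes "corner_principle TYPE('a)"
  shows "\<exists>g :: 'a \<Rightarrow> 'a. \<forall>\<alpha>. finite {\<beta>. f \<alpha> \<beta> = g \<beta>}"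
proof -
  have "monotone_fin_map (\<lambda>a. a)"
    unfolding monotone_fin_map_def by simp
  from assms[unfolded corner_principle_def, rule_format, of "{}" _ f, OF _ this]
  obtain g :: "'a \<Rightarrow> 'a" where g: "\<And>a. finite a \<Longrightarrow>
      \<exists>b. finite b \<and> a \<subseteq> b \<and> (\<forall>\<alpha>\<in>b. {\<beta>. f \<alpha> \<beta> = g \<beta>} \<subseteq> b)"
    by auto
  have "finite {\<beta>. f \<alpha> \<beta> = g \<beta>}" for \<alpha>
  proof -
    obtain b where "finite b" "\<alpha> \<in> b" "{\<beta>. f \<alpha> \<beta> = g \<beta>} \<subseteq> b"
      using g[of "{\<alpha>}"] by auto
    then show ?thesis by (meson finite_subset)
  qed
  then show ?thesis by blast
qed

lemma infinite_agreement_of_surj_seq: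
  fixes c :: "'a \<Rightarrow> nat \<Rightarrow> 'a"
  assumes "surj c" and "infinite (UNIV :: 'a set)"
  shows "\<exists>f :: 'a \<Rightarrow> 'a \<Rightarrow> 'a. \<forall>g. \<exists>\<alpha>. infinite {\<beta>. f \<alpha> \<beta> = g \<beta>}"
proof -
  obtain \<iota> :: "nat \<Rightarrow> 'a" where "inj \<iota>"
    using infinite_countable_subset[OF assms(2)] by blast
  define f where "f \<alpha> \<beta> = c \<alpha> (inv \<iota> \<beta>)" for \<alpha> \<beta>
  have "\<exists>\<alpha>. infinite {\<beta>. f \<alpha> \<beta> = g \<beta>}" for g
  proof -
    obtain \<alpha> where "c \<alpha> = g \<circ> \<iota>"
      using assms(1) by (metis surjD)
    with \<open>inj \<iota>\<close> have "range \<iota> \<subseteq> {\<beta>. f \<alpha> \<beta> = g \<beta>}"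
      unfolding f_def by auto
    moreover have "infinite (range \<iota>)"
      using \<open>inj \<iota>\<close> finite_imageD by blast
    ultimately show ?thesis by (meson finite_subset)
  qed
  then show ?thesis by blast
qed

text \<open>A set of naturals codes a sequence of sets of naturals via the Cantor pairing.\<close>

lemma surj_seq_of_bij_nat_set:
  fixes \<phi> :: "'a \<Rightarrow> nat set"
  assumes "bij \<phi>"
  shows "\<exists>c :: 'a \<Rightarrow> nat \<Rightarrow> 'a. surj c"
proof -
  define \<psi> where "\<psi> = inv \<phi>"
  have \<phi>_\<psi>: "\<phi> (\<psi> A) = A" for A
    using assms unfolding \<psi>_def by (simp add: bij_is_surj surj_f_inv_f)
  have \<psi>_\<phi>: "\<psi> (\<phi> x) = x" for x
    using assms unfolding \<psi>_def by (simp add: bij_is_inj)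
  define c where "c x n = \<psi> {k. prod_encode (n, k) \<in> \<phi> x}" for x n
  have "h \<in> range c" for h
  proof -
    define x where "x = \<psi> {prod_encode (n, k) | n k. k \<in> \<phi> (h n)}"
    have "{k. prod_encode (n, k) \<in> \<phi> x} = \<phi> (h n)" for n
      unfolding x_def \<phi>_\<psi> by auto
    then have "c x = h"
      unfolding c_def by (simp add: \<psi>_\<phi>)
    then show ?thesis by (metis rangeI)
  qed
  then show ?thesis by blast
qed

lemma corner_principle_no_bij_nat_set:
  fixes \<phi> :: "'a \<Rightarrow> nat set"
  assumes "corner_principle TYPE('a)"
  shows "\<not> bij \<phi>"
proof
  assume "bij \<phi>"
  then obtain c :: "'a \<Rightarrow> nat \<Rightarrow> 'a" where "surj c"
    using surj_seq_of_bij_nat_set by blast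
  moreover have "infinite (UNIV :: nat set set)"
    by (metis Pow_UNIV finite_Pow_iff infinite_UNIV_char_0)
  with \<open>bij \<phi>\<close> have "infinite (UNIV :: 'a set)"
    using bij_betw_finite by blast
  ultimately obtain f :: "'a \<Rightarrow> 'a \<Rightarrow> 'a" where "\<forall>g. \<exists>\<alpha>. infinite {\<beta>. f \<alpha> \<beta> = g \<beta>}"
    using infinite_agreement_of_surj_seq by blast
  with corner_principle_finite_agreement[OF assms, of f] show False
    by blast
qed

lemma cardSuc_natLeq_ordLeq_continuum:
  "ordLeq2 (cardSuc natLeq) (card_of (UNIV :: nat set set))"
proof -
  have "ordLess2 natLeq (card_of (UNIV :: nat set set))"
    using card_of_Pow[of "UNIV :: nat set"] card_of_nat
    by (metis Pow_UNIV ordIso_ordLess_trans ordIso_symmetric)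
  then show ?thesis
    using cardSuc_ordLess_ordLeq natLeq_Card_order card_of_Card_order by blast
qed

theorem mainTheorem1:
  assumes "ordIso2 (card_of (UNIV :: 'a set)) (cardSuc natLeq)"
    and "corner_principle TYPE('a)"
  shows "ordLess2 (card_of (UNIV :: 'a set)) (card_of (UNIV :: nat set set))"
proof (rule ccontr)
  assume "\<not> ?thesis"
  moreover have "ordLeq2 (card_of (UNIV :: 'a set)) (card_of (UNIV :: nat set set))"
    using assms(1) cardSuc_natLeq_ordLeq_continuum ordIso_ordLeq_trans by blast
  ultimately have "ordIso2 (card_of (UNIV :: 'a set)) (card_of (UNIV :: nat set set))"
    using ordLeq_iff_ordLess_or_ordIso by blast
  then obtain \<phi> :: "'a \<Rightarrow> nat set" where "bij \<phi>"
    using card_of_ordIso by blast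
  with corner_principle_no_bij_nat_set[OF assms(2)] show False
    by blast
qed

end
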